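(* For $m=1,2$ let $L_m:\mathbb{R}^4\to\mathbb{R}$ be linear functionals such that $\{\xi_1-\xi_2+\xi_3-\xi_4,L_1,L_2\}$ is linearly independent. Then there is $C<\infty$ such that for all nonnegative measurable $g_1,\dots,g_4\in L^2(\mathbb{R})$ and all measurable $E_1,E_2\subset\mathbb{R}$, \[ \int_\Xi\prod_{n=1}^4g_n(\xi_n)\prod_{m=1}^2\chi_{E_m}(L_m(\vec\xi))\,d\lambda(\vec\xi)\le C\prod_{m=1}^2|E_m|^{1/2}\prod_{n=1}^4\|g_n\|_{L^2}. \]
   Context: $\Xi=\{\vec\xi\in\mathbb{R}^4:\xi_1-\xi_2+\xi_3-\xi_4=0\}$ and $\lambda$ is (appropriately normalized) Lebesgue measure on $\Xi$; $\xi_1-\xi_2+\xi_3-\xi_4$ denotes the corresponding linear functional on $\mathbb{R}^4$. $\chi_E$ is the indicator of $E$. *)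

theory Defs
  imports "HOL-Analysis.Analysis"
begin

definition ell0 :: "real^4 \<Rightarrow> real" where
  "ell0 \<xi> = \<xi>$1 - \<xi>$2 + \<xi>$3 - \<xi>$4"

text \<open>Parametrization of the hyperplane Xi = {ell0 = 0} by its first three coordinates;
  Lebesgue measure on Xi is (up to a normalizing constant) the push-forward of
  Lebesgue measure on R^3 under this map.\<close>
definition xi_of :: "real^3 \<Rightarrow> real^4" where
  "xi_of x = vector [x$1, x$2, x$3, x$1 - x$2 + x$3]"

definition ennsqrt :: "ennreal \<Rightarrow> ennreal" where
  "ennsqrt x = (if x = \<infinity> then \<infinity> else ennreal (sqrt (enn2real x)))"

definition L2norm :: "(real \<Rightarrow> real) \<Rightarrow> real" where
  "L2norm g = sqrt (LINT x|lborel. (g x)^2)"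

end

theory Submission
  imports Defs
begin

text \<open>Parametrize \<open>\<Xi>\<close> by its first three coordinates, so that \<open>\<xi>\<^sub>1, \<dots>, \<xi>\<^sub>4, L\<^sub>1, L\<^sub>2\<close>
  become linear forms on \<open>\<real>\<^sup>3\<close>. The independence hypothesis says that the restrictions of
  \<open>L\<^sub>1\<close> and \<open>L\<^sub>2\<close> are linearly independent, and a finite case analysis then splits the
  coordinates into pairs \<open>{a, b}\<close>, \<open>{c, d}\<close> such that both \<open>(\<xi>\<^sub>a, \<xi>\<^sub>b, L\<^sub>1)\<close> and
  \<open>(\<xi>\<^sub>c, \<xi>\<^sub>d, L\<^sub>2)\<close> are coordinate systems on \<open>\<Xi>\<close>. By Cauchy-Schwarz the integral is at most
  the product of the \<open>L\<^sup>2\<close> norms of \<open>g\<^sub>a(\<xi>\<^sub>a) g\<^sub>b(\<xi>\<^sub>b) \<chi>\<^sub>E\<^sub>1(L\<^sub>1)\<close> and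
  \<open>g\<^sub>c(\<xi>\<^sub>c) g\<^sub>d(\<xi>\<^sub>d) \<chi>\<^sub>E\<^sub>2(L\<^sub>2)\<close>, and in the respective coordinates each of these
  factors as a constant times \<open>\<parallel>g\<^sub>a\<parallel> \<parallel>g\<^sub>b\<parallel> |E\<^sub>1|\<^sup>1\<^sup>/\<^sup>2\<close>.\<close>

lemma ennsqrt_power2 [simp]: "ennsqrt x ^ 2 = x"
  by (cases x) (simp_all add: ennsqrt_def ennreal_power)

lemma power2_le_imp_le_ennreal:
  fixes x y :: ennreal
  assumes "x ^ 2 \<le> y ^ 2"
  shows "x \<le> y"
proof (rule ccontr)
  assume "\<not> x \<le> y"
  then have "y ^ 2 < x ^ 2"
    by (cases x; cases y) (auto simp: ennreal_power top_unique power_strict_mono ennreal_less_iff)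
  with assms show False by simp
qed

lemma power2_eq_imp_eq_ennreal: "(x :: ennreal) ^ 2 = y ^ 2 \<Longrightarrow> x = y"
  by (metis order.antisym order.refl power2_le_imp_le_ennreal)

lemma ennsqrt_mult: "ennsqrt (x * y) = ennsqrt x * ennsqrt y"
  by (rule power2_eq_imp_eq_ennreal) (simp add: power_mult_distrib)

lemma ennsqrt_prod: "ennsqrt (\<Prod>i\<in>I. f i) = (\<Prod>i\<in>I. ennsqrt (f i))"
  by (rule power2_eq_imp_eq_ennreal) (simp add: prod_power_distrib)

lemma ennsqrt_ennreal: "0 \<le> r \<Longrightarrow> ennsqrt (ennreal r) = ennreal (sqrt r)"
  by (simp add: ennsqrt_def)

definition nn_L2_norm :: "'a measure \<Rightarrow> ('a \<Rightarrow> ennreal) \<Rightarrow> ennreal" where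
  "nn_L2_norm M f = ennsqrt (\<integral>\<^sup>+x. f x ^ 2 \<partial>M)"

lemma nn_integral_mult_le_nn_L2_norm:
  assumes "f \<in> borel_measurable M" "g \<in> borel_measurable M"
  shows "(\<integral>\<^sup>+x. f x * g x \<partial>M) \<le> nn_L2_norm M f * nn_L2_norm M g"
proof (rule power2_le_imp_le_ennreal)
  have "(nn_L2_norm M f * nn_L2_norm M g) ^ 2 = (\<integral>\<^sup>+x. f x ^ 2 \<partial>M) * (\<integral>\<^sup>+x. g x ^ 2 \<partial>M)"
    by (simp only: nn_L2_norm_def power_mult_distrib ennsqrt_power2)
  with Cauchy_Schwarz_nn_integral[OF assms]
  show "(\<integral>\<^sup>+x. f x * g x \<partial>M) ^ 2 \<le> (nn_L2_norm M f * nn_L2_norm M g) ^ 2"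
    by simp
qed

lemma nn_L2_norm_indicator:
  assumes "E \<in> sets M"
  shows "nn_L2_norm M (indicator E) = ennsqrt (emeasure M E)"
proof -
  have "(\<lambda>x. indicator E x ^ 2) = (indicator E :: 'a \<Rightarrow> ennreal)"
    by (auto split: split_indicator)
  then show ?thesis
    using assms by (simp only: nn_L2_norm_def nn_integral_indicator)
qed

lemma nn_L2_norm_eq_L2norm:
  fixes g :: "real \<Rightarrow> real"
  assumes "g \<in> borel_measurable lborel" "\<And>t. 0 \<le> g t" "integrable lborel (\<lambda>t. g t ^ 2)"
  shows "nn_L2_norm lborel (\<lambda>t. ennreal (g t)) = ennreal (L2norm g)"
proof -
  have "(\<integral>\<^sup>+t. ennreal (g t) ^ 2 \<partial>lborel) = ennreal (LINT t|lborel. g t ^ 2)"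
    using assms by (simp add: ennreal_power nn_integral_eq_integral)
  moreover have "0 \<le> (LINT t|lborel. g t ^ 2)"
    by (simp add: integral_nonneg_AE)
  ultimately show ?thesis
    by (simp add: nn_L2_norm_def L2norm_def ennsqrt_ennreal)
qed

lemma borel_measurable_matrix_vector_mult [measurable]:
  "(\<lambda>x. A *v x) \<in> borel_measurable (borel :: (real^'n) measure)"
  by (intro borel_measurable_continuous_onI linear_continuous_on
      matrix_vector_mul_bounded_linear)

lemma lborel_eq_density_distr_matrix:
  fixes A :: "real^'n::{finite,wellorder}^'n::_"
  assumes "det A \<noteq> 0"
  shows "lborel = density (distr lborel borel (\<lambda>x. A *v x)) (\<lambda>_. ennreal \<bar>det A\<bar>)"
proof (rule lborel_eqI)
  obtain B where AB: "A ** B = mat 1" and BA: "B ** A = mat 1"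
    using assms invertible_det_nz invertible_def by blast
  have "det A * det B = 1"
    by (metis AB det_I det_mul)
  then have det_AB: "\<bar>det A\<bar> * \<bar>det B\<bar> = 1"
    by (metis abs_mult abs_one)
  fix l u :: "real^'n::_" assume le: "\<And>b. b \<in> Basis \<Longrightarrow> l \<bullet> b \<le> u \<bullet> b"
  have preimage: "(\<lambda>x. A *v x) -` box l u = (\<lambda>x. B *v x) ` box l u"
    using AB BA by (force simp: matrix_vector_mul_assoc)
  have "(\<lambda>x. A *v x) -` box l u \<in> sets borel"
    by (rule measurable_sets_borel[OF borel_measurable_matrix_vector_mult]) simp
  then have "emeasure lborel ((\<lambda>x. A *v x) -` box l u) = emeasure lebesgue ((\<lambda>x. B *v x) ` box l u)"
    by (simp add: emeasure_completion flip: preimage)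
  also have "\<dots> = ennreal (\<bar>det B\<bar> * measure lebesgue (box l u))"
    using measurable_linear_image[of "\<lambda>x. B *v x"] measure_linear_image[of "\<lambda>x. B *v x"]
    by (simp add: emeasure_eq_measure2 matrix_vector_mul_linear)
  finally have "emeasure (density (distr lborel borel (\<lambda>x. A *v x)) (\<lambda>_. ennreal \<bar>det A\<bar>)) (box l u)
      = ennreal (measure lebesgue (box l u))"
    by (simp add: emeasure_density_const emeasure_distr ennreal_mult'[symmetric]
        mult.assoc[symmetric] det_AB)
  then show "emeasure (density (distr lborel borel (\<lambda>x. A *v x)) (\<lambda>_. ennreal \<bar>det A\<bar>)) (box l u)
      = (\<Prod>b\<in>Basis. (u - l) \<bullet> b)"
    using le by (simp add: measure_completion inner_diff_left)
qed simp

lemma prod_Basis_vec: "(\<Prod>b\<in>(Basis :: (real^'n) set). F (axis_index b)) = (\<Prod>i\<in>UNIV. F i)"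
  by (simp add: Basis_vec_def UNION_singleton_eq_range prod.reindex axis_eq_axis inj_on_def)

lemma nn_integral_lborel_prod_vec:
  fixes G :: "'n::finite \<Rightarrow> real \<Rightarrow> ennreal"
  assumes "\<And>i. G i \<in> borel_measurable borel"
  shows "(\<integral>\<^sup>+x. (\<Prod>i\<in>UNIV. G i (x $ i)) \<partial>(lborel :: (real^'n) measure))
       = (\<Prod>i\<in>UNIV. \<integral>\<^sup>+t. G i t \<partial>lborel)"
proof -
  have "(\<Prod>b\<in>Basis. G (axis_index b) (x \<bullet> b)) = (\<Prod>i\<in>UNIV. G i (x $ i))" for x :: "real^'n"
  proof -
    have "(\<Prod>b\<in>Basis. G (axis_index b) (x \<bullet> b))
        = (\<Prod>b\<in>Basis. G (axis_index b) (x $ axis_index (b :: real^'n)))"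
      by (intro prod.cong refl) (metis axis_index cart_eq_inner_axis)
    then show ?thesis
      by (simp only: prod_Basis_vec[of "\<lambda>i. G i (x $ i)"])
  qed
  then have "(\<integral>\<^sup>+x. (\<Prod>i\<in>UNIV. G i (x $ i)) \<partial>(lborel :: (real^'n) measure))
      = (\<integral>\<^sup>+x. (\<Prod>b\<in>Basis. G (axis_index b) (x \<bullet> b)) \<partial>(lborel :: (real^'n) measure))"
    by simp
  also have "\<dots> = (\<Prod>b\<in>Basis. \<integral>\<^sup>+t. G (axis_index (b :: real^'n)) t \<partial>lborel)"
    using assms by (intro nn_integral_lborel_prod) auto
  finally show ?thesis
    by (simp only: prod_Basis_vec[of "\<lambda>i. \<integral>\<^sup>+t. G i t \<partial>lborel"])
qed

lemma nn_integral_prod_matrix_rows: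
  fixes A :: "real^'n::{finite,wellorder}^'n::_" and G :: "'n \<Rightarrow> real \<Rightarrow> ennreal"
  assumes "det A \<noteq> 0" and [measurable]: "\<And>i. G i \<in> borel_measurable borel"
  shows "(\<integral>\<^sup>+x. (\<Prod>i\<in>UNIV. G i ((A *v x) $ i)) \<partial>lborel)
       = ennreal (1 / \<bar>det A\<bar>) * (\<Prod>i\<in>UNIV. \<integral>\<^sup>+t. G i t \<partial>lborel)"
proof -
  have "(\<Prod>i\<in>UNIV. \<integral>\<^sup>+t. G i t \<partial>lborel) = (\<integral>\<^sup>+y. (\<Prod>i\<in>UNIV. G i (y $ i)) \<partial>lborel)"
    by (simp add: nn_integral_lborel_prod_vec)
  also have "\<dots> = ennreal \<bar>det A\<bar> * (\<integral>\<^sup>+x. (\<Prod>i\<in>UNIV. G i ((A *v x) $ i)) \<partial>lborel)"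
    by (subst lborel_eq_density_distr_matrix[OF assms(1)])
      (simp add: nn_integral_density nn_integral_distr nn_integral_cmult)
  finally show ?thesis
    using assms(1) by (simp add: ennreal_mult'[symmetric] mult.assoc[symmetric] flip: ennreal_mult)
qed

lemma nn_L2_norm_prod_matrix_rows:
  fixes A :: "real^'n::{finite,wellorder}^'n::_" and f :: "'n \<Rightarrow> real \<Rightarrow> ennreal"
  assumes "det A \<noteq> 0" and "\<And>i. f i \<in> borel_measurable borel"
  shows "nn_L2_norm lborel (\<lambda>x. \<Prod>i\<in>UNIV. f i ((A *v x) $ i))
       = ennreal (1 / sqrt \<bar>det A\<bar>) * (\<Prod>i\<in>UNIV. nn_L2_norm lborel (f i))"
proof -
  have "(\<integral>\<^sup>+x. (\<Prod>i\<in>UNIV. f i ((A *v x) $ i)) ^ 2 \<partial>lborel)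
      = ennreal (1 / \<bar>det A\<bar>) * (\<Prod>i\<in>UNIV. \<integral>\<^sup>+t. f i t ^ 2 \<partial>lborel)"
    using nn_integral_prod_matrix_rows[OF assms(1), of "\<lambda>i t. f i t ^ 2"] assms(2)
    by (simp add: prod_power_distrib)
  moreover have "ennsqrt (ennreal (1 / \<bar>det A\<bar>)) = ennreal (1 / sqrt \<bar>det A\<bar>)"
    by (simp add: ennsqrt_ennreal real_sqrt_divide)
  ultimately show ?thesis
    by (simp only: nn_L2_norm_def ennsqrt_mult ennsqrt_prod)
qed

lemma prod_UNIV_3: "prod f (UNIV :: 3 set) = f 1 * f 2 * f 3"
  unfolding UNIV_3 by (simp add: ac_simps)

lemma matrix_vector_mult_vector_3:
  fixes u v w x :: "real^3"
  shows "((vector [u, v, w] :: real^3^3) *v x) $ 1 = u \<bullet> x"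
    and "((vector [u, v, w] :: real^3^3) *v x) $ 2 = v \<bullet> x"
    and "((vector [u, v, w] :: real^3^3) *v x) $ 3 = w \<bullet> x"
  by (simp_all add: matrix_vector_mul_component)

lemma nn_L2_norm_triple_product:
  fixes u v w :: "real^3" and f1 f2 f3 :: "real \<Rightarrow> ennreal"
  assumes "det (vector [u, v, w] :: real^3^3) \<noteq> 0"
    and "f1 \<in> borel_measurable borel" "f2 \<in> borel_measurable borel" "f3 \<in> borel_measurable borel"
  shows "nn_L2_norm lborel (\<lambda>x. f1 (u \<bullet> x) * f2 (v \<bullet> x) * f3 (w \<bullet> x))
       = ennreal (1 / sqrt \<bar>det (vector [u, v, w] :: real^3^3)\<bar>)
         * nn_L2_norm lborel f1 * nn_L2_norm lborel f2 * nn_L2_norm lborel f3"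
proof -
  define f where "f i = (if i = 1 then f1 else if i = 2 then f2 else f3)" for i :: 3
  have "(\<lambda>x. f1 (u \<bullet> x) * f2 (v \<bullet> x) * f3 (w \<bullet> x))
      = (\<lambda>x. \<Prod>i\<in>UNIV. f i ((vector [u, v, w] *v x) $ i))"
    by (simp only: prod_UNIV_3 f_def matrix_vector_mult_vector_3) simp
  moreover have "(\<Prod>i\<in>UNIV. nn_L2_norm lborel (f i))
      = nn_L2_norm lborel f1 * nn_L2_norm lborel f2 * nn_L2_norm lborel f3"
    by (simp only: prod_UNIV_3 f_def) simp
  moreover have "\<And>i. f i \<in> borel_measurable borel"
    using assms(2-4) by (simp add: f_def)
  ultimately show ?thesis
    using nn_L2_norm_prod_matrix_rows[OF assms(1), of f] by (simp only: mult.assoc)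
qed

lemma linear_eq_inner_axis:
  fixes f :: "real^'n \<Rightarrow> real"
  assumes "linear f"
  shows "f x = (\<chi> j. f (axis j 1)) \<bullet> x"
proof -
  have "f x = f (\<Sum>j\<in>UNIV. x $ j *\<^sub>R axis j 1)"
    by (simp add: basis_expansion scalar_mult_eq_scaleR[symmetric])
  also have "\<dots> = (\<Sum>j\<in>UNIV. x $ j * f (axis j 1))"
    using assms by (simp add: linear_sum linear_cmul)
  finally show ?thesis
    by (simp add: inner_vec_def mult.commute)
qed

lemma linear_xi_of: "linear xi_of"
  by (rule linearI) (simp_all add: xi_of_def vec_eq_iff forall_4 vector_def algebra_simps)

lemma xi_of_nth [simp]:
  "xi_of x $ 1 = x $ 1" "xi_of x $ 2 = x $ 2" "xi_of x $ 3 = x $ 3" "xi_of x $ 4 = x $ 1 - x $ 2 + x $ 3"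
  by (simp_all add: xi_of_def vector_def)

definition Xi_coeffs :: "(real^4 \<Rightarrow> real) \<Rightarrow> real^3" where
  "Xi_coeffs f = (\<chi> j. f (xi_of (axis j 1)))"

lemma linear_on_Xi_eq_inner:
  assumes "linear f"
  shows "f (xi_of x) = Xi_coeffs f \<bullet> x"
proof -
  have "linear (\<lambda>x. f (xi_of x))"
    using linear_compose[OF linear_xi_of assms] by (simp only: o_def)
  then show ?thesis
    unfolding Xi_coeffs_def by (rule linear_eq_inner_axis)
qed

lemma Xi_coeffs_coordinates:
  "Xi_coeffs (\<lambda>\<xi>. \<xi> $ 1) = vector [1, 0, 0]"
  "Xi_coeffs (\<lambda>\<xi>. \<xi> $ 2) = vector [0, 1, 0]"
  "Xi_coeffs (\<lambda>\<xi>. \<xi> $ 3) = vector [0, 0, 1]"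
  "Xi_coeffs (\<lambda>\<xi>. \<xi> $ 4) = vector [1, -1, 1]"
  by (simp_all add: Xi_coeffs_def vec_eq_iff forall_3 axis_def)

lemma linear_vanishing_on_Xi:
  assumes "linear f" and "\<And>x. f (xi_of x) = 0"
  shows "f \<xi> = - f (axis 4 1) * ell0 \<xi>"
proof -
  have "\<xi> = xi_of (vector [\<xi> $ 1, \<xi> $ 2, \<xi> $ 3]) - ell0 \<xi> *\<^sub>R axis 4 1"
    by (simp add: vec_eq_iff forall_4 ell0_def axis_def)
  then have "f \<xi> = f (xi_of (vector [\<xi> $ 1, \<xi> $ 2, \<xi> $ 3]) - ell0 \<xi> *\<^sub>R axis 4 1)"
    by (rule arg_cong)
  also have "\<dots> = - f (axis 4 1) * ell0 \<xi>"
    by (simp add: linear_diff[OF assms(1)] linear_cmul[OF assms(1)] assms(2))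
  finally show ?thesis .
qed

lemma Xi_coeffs_cross_nonzero:
  fixes L :: "2 \<Rightarrow> (real^4 \<Rightarrow> real)"
  assumes lin: "\<And>m. linear (L m)"
    and indep: "\<And>(c0::real) (c::2 \<Rightarrow> real).
                 (\<forall>\<xi>. c0 * ell0 \<xi> + (\<Sum>m\<in>UNIV. c m * L m \<xi>) = 0)
                 \<Longrightarrow> c0 = 0 \<and> (\<forall>m. c m = 0)"
  shows "cross3 (Xi_coeffs (L 1)) (Xi_coeffs (L 2)) \<noteq> 0"
proof
  assume "cross3 (Xi_coeffs (L 1)) (Xi_coeffs (L 2)) = 0"
  then consider "Xi_coeffs (L 1) = 0" | "Xi_coeffs (L 2) = 0"
    | k where "Xi_coeffs (L 2) = k *\<^sub>R Xi_coeffs (L 1)"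
    by (auto simp: cross_eq_0 collinear_lemma)
  then obtain c :: "2 \<Rightarrow> real" where "c 1 \<noteq> 0 \<or> c 2 \<noteq> 0"
    and c: "c 1 *\<^sub>R Xi_coeffs (L 1) + c 2 *\<^sub>R Xi_coeffs (L 2) = 0"
  proof cases
    case 1
    then show ?thesis by (intro that[of "\<lambda>m. if m = 1 then 1 else 0"]) simp_all
  next
    case 2
    then show ?thesis by (intro that[of "\<lambda>m. if m = 1 then 0 else 1"]) simp_all
  next
    case (3 k)
    then show ?thesis by (intro that[of "\<lambda>m. if m = 1 then k else -1"]) simp_all
  qed
  define f where "f \<xi> = (\<Sum>m\<in>UNIV. c m * L m \<xi>)" for \<xi>
  have "linear f"
    by (intro linearI)
      (simp_all add: f_def linear_add[OF lin] linear_cmul[OF lin] sum.distrib sum_distrib_left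
        algebra_simps)
  moreover have "f (xi_of x) = 0" for x
  proof -
    have "f (xi_of x) = (c 1 *\<^sub>R Xi_coeffs (L 1) + c 2 *\<^sub>R Xi_coeffs (L 2)) \<bullet> x"
      by (simp add: f_def UNIV_2 linear_on_Xi_eq_inner[OF lin] inner_add_left)
    then show ?thesis
      using c by simp
  qed
  ultimately have "f (axis 4 1) * ell0 \<xi> + (\<Sum>m\<in>UNIV. c m * L m \<xi>) = 0" for \<xi>
    using linear_vanishing_on_Xi[of f \<xi>] by (simp add: f_def)
  then have "\<forall>m. c m = 0"
    using indep[of "f (axis 4 1)" c] by blast
  with \<open>c 1 \<noteq> 0 \<or> c 2 \<noteq> 0\<close> show False
    by simp
qed

text \<open>The six splittings tried below are the three partitions of the coordinates into two
  pairs, each with both assignments of the pairs to \<open>p\<close> and \<open>q\<close>. If all six fail, every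
  \<open>2 \<times> 2\<close> minor of \<open>(p, q)\<close> vanishes.\<close>

lemma exists_Xi_coordinate_partition:
  fixes p q :: "real^3"
  assumes "cross3 p q \<noteq> 0"
  shows "\<exists>a b c d :: 4. distinct [a, b, c, d]
           \<and> det (vector [Xi_coeffs (\<lambda>\<xi>. \<xi> $ a), Xi_coeffs (\<lambda>\<xi>. \<xi> $ b), p] :: real^3^3) \<noteq> 0
           \<and> det (vector [Xi_coeffs (\<lambda>\<xi>. \<xi> $ c), Xi_coeffs (\<lambda>\<xi>. \<xi> $ d), q] :: real^3^3) \<noteq> 0"
    (is "\<exists>a b c d. ?P a b c d")
proof (rule ccontr)
  assume "\<not> ?thesis"
  then have "\<not> ?P 1 2 3 4" "\<not> ?P 3 4 1 2" "\<not> ?P 1 3 2 4" "\<not> ?P 2 4 1 3" "\<not> ?P 1 4 2 3" "\<not> ?P 2 3 1 4"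
    by blast+
  then have "(p$3 = 0 \<or> q$1 + q$2 = 0) \<and> (p$1 + p$2 = 0 \<or> q$3 = 0)
      \<and> (p$2 = 0 \<or> q$1 - q$3 = 0) \<and> (p$1 - p$3 = 0 \<or> q$2 = 0)
      \<and> (p$2 + p$3 = 0 \<or> q$1 = 0) \<and> (p$1 = 0 \<or> q$2 + q$3 = 0)"
    by (simp add: Xi_coeffs_coordinates det_3 algebra_simps neg_eq_iff_add_eq_0)
  then have "cross3 p q = 0"
    unfolding cross3_def vec_eq_iff forall_3
    by (elim conjE disjE)
      (simp_all add: algebra_simps eq_neg_iff_add_eq_0[symmetric] flip: eq_iff_diff_eq_0)
  with assms show False ..
qed

lemma prod_UNIV_4_distinct:
  assumes "distinct [a, b, c, d :: 4]"
  shows "prod f UNIV = f a * f b * f c * f d"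
proof -
  have UNIV_eq: "UNIV = {a, b, c, d}"
    using assms by (intro card_subset_eq[symmetric]) auto
  show ?thesis
    unfolding UNIV_eq using assms by (simp add: mult.assoc)
qed

lemma L2norm_nonneg: "0 \<le> L2norm g"
  by (simp add: L2norm_def)

lemma xi_of_nth_eq_inner: "xi_of x $ n = Xi_coeffs (\<lambda>\<xi>. \<xi> $ n) \<bullet> x"
  using bounded_linear_vec_nth[THEN bounded_linear.linear] by (rule linear_on_Xi_eq_inner)

lemma nn_L2_norm_Xi_triple_product:
  fixes l :: "real^4 \<Rightarrow> real" and g1 g2 :: "real \<Rightarrow> real" and a b :: 4
  assumes "linear l"
    and "det (vector [Xi_coeffs (\<lambda>\<xi>. \<xi> $ a), Xi_coeffs (\<lambda>\<xi>. \<xi> $ b), Xi_coeffs l] :: real^3^3) \<noteq> 0"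
      (is "?D \<noteq> 0")
    and "g1 \<in> borel_measurable lborel" "\<And>t. 0 \<le> g1 t" "integrable lborel (\<lambda>t. g1 t ^ 2)"
    and "g2 \<in> borel_measurable lborel" "\<And>t. 0 \<le> g2 t" "integrable lborel (\<lambda>t. g2 t ^ 2)"
    and "E \<in> sets lborel"
  shows "nn_L2_norm lborel
           (\<lambda>x. ennreal (g1 (xi_of x $ a)) * ennreal (g2 (xi_of x $ b)) * indicator E (l (xi_of x)))
       = ennreal (1 / sqrt \<bar>?D\<bar>) * ennreal (L2norm g1) * ennreal (L2norm g2)
         * ennsqrt (emeasure lborel E)"
  unfolding xi_of_nth_eq_inner linear_on_Xi_eq_inner[OF assms(1)] using assms(2-)
  by (subst nn_L2_norm_triple_product) (simp_all add: nn_L2_norm_eq_L2norm nn_L2_norm_indicator)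

lemma Xi_integral_bound:
  fixes L :: "2 \<Rightarrow> (real^4 \<Rightarrow> real)" and g :: "4 \<Rightarrow> real \<Rightarrow> real" and E :: "2 \<Rightarrow> real set"
    and a b c d :: 4
  defines "D1 \<equiv> det (vector [Xi_coeffs (\<lambda>\<xi>. \<xi> $ a), Xi_coeffs (\<lambda>\<xi>. \<xi> $ b), Xi_coeffs (L 1)] :: real^3^3)"
    and "D2 \<equiv> det (vector [Xi_coeffs (\<lambda>\<xi>. \<xi> $ c), Xi_coeffs (\<lambda>\<xi>. \<xi> $ d), Xi_coeffs (L 2)] :: real^3^3)"
  assumes lin: "\<And>m. linear (L m)" and abcd: "distinct [a, b, c, d]" and "D1 \<noteq> 0" "D2 \<noteq> 0"
    and g: "\<And>n. g n \<in> borel_measurable lborel" "\<And>n t. 0 \<le> g n t" "\<And>n. integrable lborel (\<lambda>t. g n t ^ 2)"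
    and E: "\<And>m. E m \<in> sets lborel"
  shows "(\<integral>\<^sup>+ x. ennreal ((\<Prod>n\<in>UNIV. g n (xi_of x $ n))
                      * (\<Prod>m\<in>UNIV. indicator (E m) (L m (xi_of x)))) \<partial>lborel)
         \<le> ennreal (1 / sqrt \<bar>D1\<bar> * (1 / sqrt \<bar>D2\<bar>))
           * (\<Prod>m\<in>UNIV. ennsqrt (emeasure lborel (E m))) * ennreal (\<Prod>n\<in>UNIV. L2norm (g n))"
proof -
  define F where "F n n' m x = ennreal (g n (xi_of x $ n)) * ennreal (g n' (xi_of x $ n'))
      * indicator (E m) (L m (xi_of x))" for n n' m x
  have [measurable]: "g n \<in> borel_measurable borel" "E m \<in> sets borel" for n m
    using g E by simp_all
  have F_measurable: "F n n' m \<in> borel_measurable lborel" for n n' m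
    unfolding F_def xi_of_nth_eq_inner linear_on_Xi_eq_inner[OF lin] by measurable
  have "ennreal ((\<Prod>n\<in>UNIV. g n (xi_of x $ n)) * (\<Prod>m\<in>UNIV. indicator (E m) (L m (xi_of x))))
      = F a b 1 x * F c d 2 x" for x
    by (simp add: prod_UNIV_4_distinct[OF abcd] UNIV_2 F_def g(2) ennreal_mult ennreal_indicator
        mult_ac)
  then have "(\<integral>\<^sup>+ x. ennreal ((\<Prod>n\<in>UNIV. g n (xi_of x $ n))
                      * (\<Prod>m\<in>UNIV. indicator (E m) (L m (xi_of x)))) \<partial>lborel)
      \<le> nn_L2_norm lborel (F a b 1) * nn_L2_norm lborel (F c d 2)"
    by (simp only:) (rule nn_integral_mult_le_nn_L2_norm[OF F_measurable F_measurable])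
  also have "\<dots> = ennreal (1 / sqrt \<bar>D1\<bar>) * ennreal (L2norm (g a)) * ennreal (L2norm (g b))
        * ennsqrt (emeasure lborel (E 1))
      * (ennreal (1 / sqrt \<bar>D2\<bar>) * ennreal (L2norm (g c)) * ennreal (L2norm (g d))
        * ennsqrt (emeasure lborel (E 2)))"
    unfolding F_def D1_def D2_def
    using nn_L2_norm_Xi_triple_product[OF lin[of 1] \<open>D1 \<noteq> 0\<close>[unfolded D1_def] g g E]
      nn_L2_norm_Xi_triple_product[OF lin[of 2] \<open>D2 \<noteq> 0\<close>[unfolded D2_def] g g E]
    by (simp only:)
  also have "\<dots> = ennreal (1 / sqrt \<bar>D1\<bar>) * ennreal (1 / sqrt \<bar>D2\<bar>)
      * (\<Prod>m\<in>UNIV. ennsqrt (emeasure lborel (E m))) * ennreal (\<Prod>n\<in>UNIV. L2norm (g n))"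
    by (simp add: prod_UNIV_4_distinct[OF abcd] UNIV_2 L2norm_nonneg ennreal_mult mult_ac)
  also have "ennreal (1 / sqrt \<bar>D1\<bar>) * ennreal (1 / sqrt \<bar>D2\<bar>)
      = ennreal (1 / sqrt \<bar>D1\<bar> * (1 / sqrt \<bar>D2\<bar>))"
    by (rule ennreal_mult[symmetric]) simp_all
  finally show ?thesis .
qed

theorem lemma4p5:
  fixes L :: "2 \<Rightarrow> (real^4 \<Rightarrow> real)"
  assumes lin: "\<And>m. linear (L m)"
    and indep: "\<And>(c0::real) (c::2 \<Rightarrow> real).
                 (\<forall>\<xi>. c0 * ell0 \<xi> + (\<Sum>m\<in>UNIV. c m * L m \<xi>) = 0)
                 \<Longrightarrow> c0 = 0 \<and> (\<forall>m. c m = 0)"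
  shows "\<exists>C::real. \<forall>(g::4 \<Rightarrow> real \<Rightarrow> real) (E::2 \<Rightarrow> real set).
           (\<forall>n. g n \<in> borel_measurable lborel \<and> (\<forall>t. 0 \<le> g n t)
                 \<and> integrable lborel (\<lambda>t. (g n t)^2))
           \<and> (\<forall>m. E m \<in> sets lborel)
           \<longrightarrow> (\<integral>\<^sup>+ x. ennreal ((\<Prod>n\<in>UNIV. g n (xi_of x $ n))
                               * (\<Prod>m\<in>UNIV. indicator (E m) (L m (xi_of x)))) \<partial>lborel)
               \<le> ennreal C * (\<Prod>m\<in>UNIV. ennsqrt (emeasure lborel (E m)))
                   * ennreal (\<Prod>n\<in>UNIV. L2norm (g n))"
proof -
  obtain a b c d :: 4 where "distinct [a, b, c, d]"
    and "det (vector [Xi_coeffs (\<lambda>\<xi>. \<xi> $ a), Xi_coeffs (\<lambda>\<xi>. \<xi> $ b), Xi_coeffs (L 1)] :: real^3^3) \<noteq> 0"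
    and "det (vector [Xi_coeffs (\<lambda>\<xi>. \<xi> $ c), Xi_coeffs (\<lambda>\<xi>. \<xi> $ d), Xi_coeffs (L 2)] :: real^3^3) \<noteq> 0"
    using exists_Xi_coordinate_partition[OF Xi_coeffs_cross_nonzero[of L, OF lin indep]] by blast
  note bound = Xi_integral_bound[OF lin this]
  show ?thesis
    by (intro exI allI impI, rule bound) auto
qed

end
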